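(* Let $K \ge 2$ be an integer, let $k \in \{1,\dots,K-1\}$, let $\mathbf{x}_0 = \mathbf{e}_k \in \{0,1\}^K$ be the $k$-th standard basis vector, and let $\mathbf{e}_K$ denote the $K$-th standard basis vector (the mask state). Let $\boldsymbol{\epsilon} = (\epsilon_1,\dots,\epsilon_K) \sim \mathcal{N}(\mathbf{0}, \mathbf{I}_K)$, let $Y = \max_{j \ne k} \epsilon_j - \epsilon_k$, and let $F_Y$ be the cumulative distribution function of $Y$. For real numbers $\tilde{\alpha}$ and $\tilde{\sigma} > 0$ with $\tilde{\alpha}^2 + \tilde{\sigma}^2 = 1$, define $\mathbf{w} = \tilde{\alpha}\mathbf{x}_0 + \tilde{\sigma}\boldsymbol{\epsilon}$ and $$\mathbf{z} = \begin{cases} \mathbf{x}_0 & \text{if } \mathbf{w}^{(k)} > \max_{j\neq k} \mathbf{w}^{(j)},\\ \mathbf{e}_K & \text{otherwise.}\end{cases}$$ Then for every $\gamma \in (0,1)$ there exist $\tilde{\alpha} \in \mathbb{R}$ and $\tilde{\sigma} > 0$ with $\tilde{\alpha}^2 + \tilde{\sigma}^2 = 1$, namely any such pair with $\tilde{\alpha}/\tilde{\sigma} = F_Y^{-1}(\gamma)$, for which $P(\mathbf{z} = \mathbf{x}_0) = \gamma$.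
   Context: This models one token of a masked discrete diffusion as the projection of a variance-preserving Gaussian latent: the discrete state keeps the ground-truth token $\mathbf{x}_0$ exactly when the ground-truth coordinate of the latent strictly exceeds all other coordinates, and otherwise collapses to the mask vector $\mathbf{e}_K$. Here $F_Y^{-1}$ denotes the inverse of $F_Y$ viewed as a map from $\mathbb{R}$ onto $(0,1)$. *)

theory Defs
  imports "HOL-Probability.Probability"
begin

definition gauss :: "nat \<Rightarrow> (nat \<Rightarrow> real) measure" where
  "gauss K = PiM {1..K} (\<lambda>_. std_normal_distribution)"

definition evec :: "nat \<Rightarrow> nat \<Rightarrow> real" where
  "evec i = (\<lambda>j. if j = i then 1 else 0)"

definition Yvar :: "nat \<Rightarrow> nat \<Rightarrow> (nat \<Rightarrow> real) \<Rightarrow> real" where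
  "Yvar K k eps = Max (eps ` ({1..K} - {k})) - eps k"

definition F_Y :: "nat \<Rightarrow> nat \<Rightarrow> real \<Rightarrow> real" where
  "F_Y K k y = measure (gauss K) {eps \<in> space (gauss K). Yvar K k eps \<le> y}"

definition F_Y_inv :: "nat \<Rightarrow> nat \<Rightarrow> real \<Rightarrow> real" where
  "F_Y_inv K k = inv_into UNIV (F_Y K k)"

definition latent :: "nat \<Rightarrow> real \<Rightarrow> real \<Rightarrow> (nat \<Rightarrow> real) \<Rightarrow> nat \<Rightarrow> real" where
  "latent k a s eps = (\<lambda>j. a * evec k j + s * eps j)"

definition zstate :: "nat \<Rightarrow> nat \<Rightarrow> real \<Rightarrow> real \<Rightarrow> (nat \<Rightarrow> real) \<Rightarrow> nat \<Rightarrow> real" where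
  "zstate K k a s eps =
     (let w = latent k a s eps in
      if w k > Max (w ` ({1..K} - {k})) then evec k else evec K)"

end

theory Submission
  imports Defs
begin

(* The state z equals x_0 exactly when Y < alpha/sigma: the latent has coordinate
   alpha + sigma eps_k at k and sigma eps_j elsewhere. Y has no atoms, because Y = c
   forces eps_j - eps_k = c for some j \<noteq> k, and each such difference is N(0,2).
   Hence F_Y is continuous, attains every value in (0,1), and P(Y < c) = F_Y c, so
   alpha/sigma = F_Y^-1 gamma gives P(z = x_0) = gamma. Every ratio c is realised on
   the unit circle by sigma = 1/sqrt(1 + c^2), alpha = c sigma. *)

lemma (in prob_space) indep_var_of_indep_vars:
  assumes "indep_vars M' X I" "i \<in> I" "j \<in> I" "i \<noteq> j"
  shows "indep_var (M' i) (X i) (M' j) (X j)"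
proof -
  have "indep_var (M' i) ((\<lambda>f. f i) \<circ> (\<lambda>\<omega>. restrict (\<lambda>l. X l \<omega>) {i}))
      (M' j) ((\<lambda>f. f j) \<circ> (\<lambda>\<omega>. restrict (\<lambda>l. X l \<omega>) {j}))"
    using assms
    by (intro indep_var_compose[OF indep_var_restrict] measurable_component_singleton) auto
  then show ?thesis by (simp add: comp_def)
qed

lemma indep_vars_PiM_components:
  assumes "I \<noteq> {}" and M: "\<And>i. i \<in> I \<Longrightarrow> prob_space (M i)"
  shows "prob_space.indep_vars (PiM I M) M (\<lambda>i x. x i) I"
proof -
  interpret P: prob_space "PiM I M" using M by (rule prob_space_PiM)
  have "distr (PiM I M) (PiM I M) (\<lambda>x. \<lambda>i\<in>I. x i) = PiM I M"
    by (subst distr_cong[where g = "\<lambda>x. x"]) (auto simp: space_PiM PiE_def extensional_restrict)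
  also have "\<dots> = PiM I (\<lambda>i. distr (PiM I M) (M i) (\<lambda>x. x i))"
    using M by (intro PiM_cong) (auto simp: distr_PiM_component)
  finally show ?thesis
    using assms by (subst P.indep_vars_iff_distr_eq_PiM') auto
qed

lemma distributed_level_set_null:
  assumes "distributed M lborel X f"
  shows "{x \<in> space M. X x = c} \<in> null_sets M"
proof -
  have X: "X \<in> borel_measurable M"
    using distributed_measurable[OF assms] by simp
  have "emeasure M (X -` {c} \<inter> space M) = 0"
    by (subst distributed_emeasure[OF assms]) (auto intro!: nn_integral_null_set)
  moreover have "X -` {c} \<inter> space M = {x \<in> space M. X x = c}" by auto
  ultimately show ?thesis using X by (auto simp: null_sets_def)
qed

context real_distribution
begin

lemma measure_lessThan_eq_cdf:
  assumes "measure M {x} = 0"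
  shows "measure M {..<x} = cdf M x"
proof -
  have "{x} \<in> null_sets M" using assms by (auto simp: emeasure_eq_measure)
  then have "measure M ({..<x} \<union> {x}) = measure M {..<x}" by (intro measure_Un_null_set) auto
  then show ?thesis by (simp add: cdf_def2 ivl_disj_un_singleton(2)[symmetric])
qed

lemma cdf_surj_unit_interval:
  assumes "\<And>x. measure M {x} = 0" and "0 < g" "g < 1"
  shows "\<exists>x. cdf M x = g"
proof -
  obtain a where a: "cdf M a < g"
    using order_tendstoD(2)[OF cdf_lim_at_bot \<open>0 < g\<close>] by (auto simp: eventually_at_bot_linorder)
  obtain b where b: "g < cdf M b"
    using order_tendstoD(1)[OF cdf_lim_at_top_prob \<open>g < 1\<close>] by (auto simp: eventually_at_top_linorder)
  have "a \<le> b"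
    using a b cdf_nondecreasing[of b a] by linarith
  moreover have "continuous_on {a..b} (cdf M)"
    using assms(1) by (intro continuous_at_imp_continuous_on) (simp add: isCont_cdf)
  ultimately show ?thesis
    using IVT'[of "cdf M" a g b] a b by auto
qed

end

lemma prob_space_std_normal: "prob_space std_normal_distribution"
  using real_dist_normal_dist by (rule real_distribution.axioms)

lemma prob_space_gauss: "prob_space (gauss K)"
  unfolding gauss_def using prob_space_std_normal by (rule prob_space_PiM)

lemma gauss_component_distributed:
  assumes "j \<in> {1..K}"
  shows "distributed (gauss K) lborel (\<lambda>x. x j) (normal_density 0 1)"
proof -
  have "(\<lambda>x. x j) \<in> measurable (gauss K) std_normal_distribution"
    unfolding gauss_def using assms by (rule measurable_component_singleton)
  moreover have "distr (gauss K) std_normal_distribution (\<lambda>x. x j) = std_normal_distribution"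
    unfolding gauss_def using assms prob_space_std_normal by (intro distr_PiM_component)
  ultimately show ?thesis
    unfolding distributed_def by (auto cong: distr_cong measurable_cong_sets)
qed

lemma gauss_component_measurable:
  "j \<in> {1..K} \<Longrightarrow> (\<lambda>x. x j) \<in> borel_measurable (gauss K)"
  using gauss_component_distributed distributed_measurable by fastforce

lemma gauss_diff_level_set_null:
  assumes "j \<in> {1..K}" "k \<in> {1..K}" "j \<noteq> k"
  shows "{x \<in> space (gauss K). x j - x k = c} \<in> null_sets (gauss K)"
proof -
  interpret prob_space "gauss K" by (rule prob_space_gauss)
  have "indep_vars (\<lambda>_. std_normal_distribution) (\<lambda>i x. x i) {1..K}"
    unfolding gauss_def using assms prob_space_std_normal by (intro indep_vars_PiM_components) auto
  then have "indep_var std_normal_distribution (\<lambda>x. x j) std_normal_distribution (\<lambda>x. x k)"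
    using assms by (intro indep_var_of_indep_vars) auto
  then have "indep_var borel ((\<lambda>y. y) \<circ> (\<lambda>x. x j)) borel ((\<lambda>y. y) \<circ> (\<lambda>x. x k))"
    by (rule indep_var_compose) (auto intro: measurable_ident_sets)
  then have "distributed (gauss K) lborel (\<lambda>x. x j - x k) (normal_density (0 - 0) (sqrt (1\<^sup>2 + 1\<^sup>2)))"
    using assms by (intro diff_indep_normal gauss_component_distributed) (auto simp: comp_def)
  then show ?thesis by (rule distributed_level_set_null)
qed

lemma Yvar_measurable:
  assumes "k \<in> {1..K}"
  shows "Yvar K k \<in> borel_measurable (gauss K)"
  unfolding Yvar_def using assms
  by (intro borel_measurable_diff borel_measurable_Max gauss_component_measurable) auto

lemma Yvar_level_set_null:
  assumes "K \<ge> 2" "k \<in> {1..K}"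
  shows "{x \<in> space (gauss K). Yvar K k x = c} \<in> null_sets (gauss K)"
proof (rule null_sets_subset)
  define S where "S = {1..K} - {k}"
  have "(if k = 1 then 2 else 1) \<in> S"
    unfolding S_def using assms by auto
  then have "S \<noteq> {}" by blast
  show "{x \<in> space (gauss K). Yvar K k x = c}
      \<subseteq> (\<Union>j\<in>S. {x \<in> space (gauss K). x j - x k = c})"
  proof
    fix x assume "x \<in> {x \<in> space (gauss K). Yvar K k x = c}"
    then have x: "x \<in> space (gauss K)" and Y: "Yvar K k x = c" by auto
    have "Max (x ` S) \<in> x ` S"
      using \<open>S \<noteq> {}\<close> by (intro Max_in) (auto simp: S_def)
    then obtain j where "j \<in> S" "Max (x ` S) = x j"
      by blast
    with x Y show "x \<in> (\<Union>j\<in>S. {x \<in> space (gauss K). x j - x k = c})"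
      unfolding Yvar_def S_def by auto
  qed
  show "(\<Union>j\<in>S. {x \<in> space (gauss K). x j - x k = c}) \<in> null_sets (gauss K)"
    unfolding S_def using assms by (intro null_sets.finite_UN gauss_diff_level_set_null) auto
  show "{x \<in> space (gauss K). Yvar K k x = c} \<in> sets (gauss K)"
    using measurable_sets[OF Yvar_measurable[OF assms(2)], of "{c}"]
    by (simp add: vimage_def Int_def conj_commute)
qed

lemma Yvar_distr_no_atoms:
  assumes "K \<ge> 2" "k \<in> {1..K}"
  shows "measure (distr (gauss K) borel (Yvar K k)) {c} = 0"
  using Yvar_level_set_null[OF assms, of c] Yvar_measurable[OF assms(2)]
  by (subst measure_distr) (auto simp: vimage_def Int_def conj_commute measure_def null_setsD1)

lemma real_distribution_Yvar:
  "k \<in> {1..K} \<Longrightarrow> real_distribution (distr (gauss K) borel (Yvar K k))"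
  using prob_space_gauss Yvar_measurable by (rule prob_space.real_distribution_distr)

lemma F_Y_eq_cdf:
  assumes "k \<in> {1..K}"
  shows "F_Y K k = cdf (distr (gauss K) borel (Yvar K k))"
  using Yvar_measurable[OF assms] unfolding F_Y_def cdf_def
  by (subst measure_distr) (auto simp: vimage_def Int_def conj_commute)

lemma F_Y_F_Y_inv:
  assumes "K \<ge> 2" "k \<in> {1..K}" "0 < g" "g < 1"
  shows "F_Y K k (F_Y_inv K k g) = g"
proof -
  interpret real_distribution "distr (gauss K) borel (Yvar K k)"
    using assms(2) by (rule real_distribution_Yvar)
  have "g \<in> range (F_Y K k)"
    using cdf_surj_unit_interval[OF Yvar_distr_no_atoms[OF assms(1,2)] assms(3,4)]
    by (auto simp: F_Y_eq_cdf[OF assms(2)])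
  then show ?thesis
    unfolding F_Y_inv_def by (rule f_inv_into_f)
qed

lemma measure_Yvar_less_eq_F_Y:
  assumes "K \<ge> 2" "k \<in> {1..K}"
  shows "measure (gauss K) {x \<in> space (gauss K). Yvar K k x < c} = F_Y K k c"
proof -
  interpret real_distribution "distr (gauss K) borel (Yvar K k)"
    using assms(2) by (rule real_distribution_Yvar)
  have "measure (gauss K) {x \<in> space (gauss K). Yvar K k x < c}
      = measure (distr (gauss K) borel (Yvar K k)) {..<c}"
    using Yvar_measurable[OF assms(2)]
    by (subst measure_distr) (auto simp: vimage_def Int_def conj_commute)
  also have "\<dots> = F_Y K k c"
    using measure_lessThan_eq_cdf[OF Yvar_distr_no_atoms[OF assms]] F_Y_eq_cdf[OF assms(2)]
    by simp
  finally show ?thesis .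
qed

lemma zstate_eq_evec_iff:
  assumes "K \<ge> 2" "k \<in> {1..K-1}" "s > 0"
  shows "zstate K k a s eps = evec k \<longleftrightarrow> Yvar K k eps < a / s"
proof -
  define S where "S = {1..K} - {k}"
  have "K \<in> S" unfolding S_def using assms by auto
  then have "S \<noteq> {}" "finite S" unfolding S_def by auto
  have "evec k \<noteq> evec K"
    using assms by (auto simp: evec_def fun_eq_iff)
  have "latent k a s eps ` S = (\<lambda>m. s * m) ` eps ` S"
    unfolding image_image S_def latent_def evec_def by simp
  then have "Max (latent k a s eps ` S) = s * Max (eps ` S)"
    using \<open>s > 0\<close> \<open>S \<noteq> {}\<close> \<open>finite S\<close>
    by (simp add: mono_Max_commute[symmetric] monoI)
  then have "zstate K k a s eps = evec k \<longleftrightarrow> s * Max (eps ` S) < a + s * eps k"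
    using \<open>evec k \<noteq> evec K\<close> unfolding zstate_def Let_def S_def
    by (simp add: latent_def evec_def)
  also have "\<dots> \<longleftrightarrow> Yvar K k eps < a / s"
    unfolding Yvar_def S_def pos_less_divide_eq[OF \<open>s > 0\<close>] by (simp add: algebra_simps)
  finally show ?thesis .
qed

lemma ex_unit_circle_ratio:
  fixes c :: real
  shows "\<exists>a s. s > 0 \<and> a\<^sup>2 + s\<^sup>2 = 1 \<and> a / s = c"
proof (intro exI conjI)
  define s where "s = 1 / sqrt (1 + c\<^sup>2)"
  have "1 + c\<^sup>2 > 0" by (simp add: add_pos_nonneg)
  then show "s > 0" and "(c * s)\<^sup>2 + s\<^sup>2 = 1" and "c * s / s = c"
    unfolding s_def by (simp_all add: power_divide power_mult_distrib field_simps)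
qed

theorem lemma3p1:
  fixes K k :: nat and \<gamma> :: real
  assumes "K \<ge> 2" and "k \<in> {1..K-1}" and "0 < \<gamma>" and "\<gamma> < 1"
  shows "(\<exists>a s. s > 0 \<and> a\<^sup>2 + s\<^sup>2 = 1 \<and> a / s = F_Y_inv K k \<gamma>) \<and>
         (\<forall>a s. s > 0 \<longrightarrow> a\<^sup>2 + s\<^sup>2 = 1 \<longrightarrow> a / s = F_Y_inv K k \<gamma> \<longrightarrow>
            measure (gauss K) {eps \<in> space (gauss K). zstate K k a s eps = evec k} = \<gamma>)"
proof (intro conjI allI impI ex_unit_circle_ratio)
  fix a s :: real
  assume "s > 0" and "a / s = F_Y_inv K k \<gamma>"
  have k: "k \<in> {1..K}" using assms(2) by auto
  have "{eps \<in> space (gauss K). zstate K k a s eps = evec k}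
      = {eps \<in> space (gauss K). Yvar K k eps < F_Y_inv K k \<gamma>}"
    using zstate_eq_evec_iff[OF assms(1,2) \<open>s > 0\<close>] \<open>a / s = F_Y_inv K k \<gamma>\<close> by auto
  also have "measure (gauss K) \<dots> = F_Y K k (F_Y_inv K k \<gamma>)"
    using assms(1) k by (rule measure_Yvar_less_eq_F_Y)
  also have "\<dots> = \<gamma>"
    using assms(1) k assms(3,4) by (rule F_Y_F_Y_inv)
  finally show "measure (gauss K) {eps \<in> space (gauss K). zstate K k a s eps = evec k} = \<gamma>" .
qed

end
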